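(* Let $G$ be a finite connected simple graph and let $\overrightarrow{G}$ be the directed graph obtained by replacing every edge $xy$ of $G$ by the two directed edges $\overrightarrow{xy}$ and $\overrightarrow{yx}$. Then the complex $\Delta(\overrightarrow{G})$ is pure if and only if $\mathrm{diam}(G)\leqslant 2$.
   Context: For a finite directed graph $D$, the complex of directed trees $\Delta(D)$ has the directed edges of $D$ as vertices, and its faces are the edge sets of directed forests in $D$ (vertex-disjoint unions of rooted directed trees; equivalently, edge sets in which every vertex has in-degree at most $1$ and there is no directed cycle). A simplicial complex is pure if all its maximal faces have the same dimension. $\mathrm{diam}(G)$ is the greatest distance between two vertices of $G$. *)

theory Defs
  imports Main
begin

definition simple_graph :: "'a set \<Rightarrow> ('a \<Rightarrow> 'a \<Rightarrow> bool) \<Rightarrow> bool" where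
  "simple_graph V E \<longleftrightarrow> finite V \<and>
     (\<forall>x y. E x y \<longrightarrow> x \<in> V \<and> y \<in> V \<and> x \<noteq> y) \<and>
     (\<forall>x y. E x y \<longrightarrow> E y x)"

text \<open>A walk from u to v given as its list of vertices; its length is length xs - 1.\<close>
definition is_walk :: "('a \<Rightarrow> 'a \<Rightarrow> bool) \<Rightarrow> 'a list \<Rightarrow> 'a \<Rightarrow> 'a \<Rightarrow> bool" where
  "is_walk E xs u v \<longleftrightarrow> xs \<noteq> [] \<and> hd xs = u \<and> last xs = v \<and>
     (\<forall>i. Suc i < length xs \<longrightarrow> E (xs ! i) (xs ! Suc i))"

definition connected_graph :: "'a set \<Rightarrow> ('a \<Rightarrow> 'a \<Rightarrow> bool) \<Rightarrow> bool" where
  "connected_graph V E \<longleftrightarrow> V \<noteq> {} \<and> (\<forall>u\<in>V. \<forall>v\<in>V. \<exists>xs. is_walk E xs u v)"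

definition gdist :: "('a \<Rightarrow> 'a \<Rightarrow> bool) \<Rightarrow> 'a \<Rightarrow> 'a \<Rightarrow> nat" where
  "gdist E u v = (LEAST n. \<exists>xs. is_walk E xs u v \<and> length xs = Suc n)"

definition diam :: "'a set \<Rightarrow> ('a \<Rightarrow> 'a \<Rightarrow> bool) \<Rightarrow> nat" where
  "diam V E = Max {gdist E u v | u v. u \<in> V \<and> v \<in> V}"

definition double_digraph :: "('a \<Rightarrow> 'a \<Rightarrow> bool) \<Rightarrow> ('a \<times> 'a) set" where
  "double_digraph E = {(x, y). E x y \<or> E y x}"

definition dir_tree_complex :: "('a \<times> 'a) set \<Rightarrow> ('a \<times> 'a) set set" where
  "dir_tree_complex A = {F. F \<subseteq> A \<and> (\<forall>v. card {u. (u, v) \<in> F} \<le> 1) \<and> acyclic F}"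

definition maximal_faces :: "'b set set \<Rightarrow> 'b set set" where
  "maximal_faces K = {F \<in> K. \<forall>H \<in> K. F \<subseteq> H \<longrightarrow> F = H}"

definition pure_complex :: "'b set set \<Rightarrow> bool" where
  "pure_complex K \<longleftrightarrow> (\<forall>F \<in> maximal_faces K. \<forall>H \<in> maximal_faces K. card F = card H)"

end

theory Submission
  imports Defs
begin

text \<open>A face \<open>F\<close> is a directed forest with roots \<open>V - Range F\<close>, and each non-root has exactly
  one incoming arc, so \<open>|F| = |V| - #roots\<close>. In a maximal face every root
  reaches each of its neighbours (otherwise the arc into the root could be added), and since
  in-degrees are at most one, the vertices reaching a common vertex are comparable. Hence if
  \<open>diam G \<le> 2\<close>, any two roots of a maximal face reach a common vertex and coincide: all maximal
  faces are spanning trees. If \<open>u\<close>, \<open>v\<close> are at distance at least 3, the arcs leaving \<open>u\<close> or \<open>v\<close>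
  form a face whose extensions can never enter \<open>u\<close> or \<open>v\<close>, which yields a maximal face with two
  roots, while a spanning tree yields one with a single root.\<close>

section \<open>Faces of the complex of directed trees\<close>

lemma dir_tree_complex_finite:
  "finite A \<Longrightarrow> finite (dir_tree_complex A)"
  by (rule finite_subset[of _ "Pow A"]) (auto simp: dir_tree_complex_def)

lemma single_valued_converse_face:
  assumes "F \<in> dir_tree_complex A" and "finite A"
  shows "single_valued (F\<inverse>)"
proof (rule single_valuedI)
  fix v a b assume "(v, a) \<in> F\<inverse>" "(v, b) \<in> F\<inverse>"
  moreover have "{u. (u, v) \<in> F} \<subseteq> fst ` A"
    using assms(1) by (force simp: dir_tree_complex_def)
  then have "finite {u. (u, v) \<in> F}"
    using \<open>finite A\<close> finite_subset by blast
  ultimately show "a = b"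
    using assms(1) card_le_Suc0_iff_eq by (fastforce simp: dir_tree_complex_def)
qed

lemma card_face_add_card_roots:
  assumes F: "F \<in> dir_tree_complex A" and "finite A" and A: "A \<subseteq> V \<times> V" and "finite V"
  shows "card F + card (V - Range F) = card V"
proof -
  have "inj_on snd F"
    using single_valued_converse_face[OF F \<open>finite A\<close>]
    by (auto simp: inj_on_def single_valued_def)
  then have "card F = card (Range F)"
    by (metis card_image snd_eq_Range)
  moreover have "Range F \<subseteq> V"
    using F A by (auto simp: dir_tree_complex_def)
  ultimately show ?thesis
    using \<open>finite V\<close> by (metis card_Diff_subset card_mono finite_subset le_add_diff_inverse)
qed

lemma face_has_root:
  assumes F: "F \<in> dir_tree_complex A" and "finite A" and A: "A \<subseteq> V \<times> V" and "V \<noteq> {}"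
  shows "V - Range F \<noteq> {}"
proof -
  have "finite F" "acyclic F" "F \<subseteq> V \<times> V"
    using F A \<open>finite A\<close> by (auto simp: dir_tree_complex_def intro: finite_subset)
  then have "wf F" by (simp add: finite_acyclic_wf)
  then obtain z where "z \<in> V" "\<forall>y. (y, z) \<in> F \<longrightarrow> y \<notin> V"
    using \<open>V \<noteq> {}\<close> unfolding wf_eq_minimal by blast
  then show ?thesis using \<open>F \<subseteq> V \<times> V\<close> by blast
qed

lemma root_eq_of_reaches:
  "(r, x) \<in> F\<^sup>* \<Longrightarrow> x \<notin> Range F \<Longrightarrow> x = r"
  by (auto elim: rtranclE)

lemma insert_arc_face:
  assumes F: "F \<in> dir_tree_complex A" and "(x, y) \<in> A" and "y \<notin> Range F"
    and "(y, x) \<notin> F\<^sup>*"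
  shows "insert (x, y) F \<in> dir_tree_complex A"
proof -
  have "card {u. (u, v) \<in> insert (x, y) F} \<le> 1" for v
  proof (cases "v = y")
    case True
    then have "{u. (u, v) \<in> insert (x, y) F} = {x}" using \<open>y \<notin> Range F\<close> by auto
    then show ?thesis by simp
  next
    case False
    then show ?thesis using F by (simp add: dir_tree_complex_def)
  qed
  then show ?thesis using assms by (simp add: dir_tree_complex_def)
qed

lemma maximal_face_exists:
  assumes "F \<in> dir_tree_complex A" and "finite A"
  shows "\<exists>G \<in> maximal_faces (dir_tree_complex A). F \<subseteq> G"
  using finite_has_maximal2[OF dir_tree_complex_finite[OF \<open>finite A\<close>] assms(1)]
  by (auto simp: maximal_faces_def)

text \<open>Otherwise the arc \<open>(w, r)\<close> could be added to a maximal face.\<close>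
lemma maximal_face_root_reaches:
  assumes G: "G \<in> maximal_faces (dir_tree_complex A)" and "(w, r) \<in> A" and r: "r \<notin> Range G"
  shows "(r, w) \<in> G\<^sup>*"
proof (rule ccontr)
  assume "(r, w) \<notin> G\<^sup>*"
  then have "insert (w, r) G \<in> dir_tree_complex A"
    using G assms by (intro insert_arc_face) (auto simp: maximal_faces_def)
  then have "(w, r) \<in> G" using G by (auto simp: maximal_faces_def)
  then show False using r by blast
qed

lemma notin_Range_if_out_arcs_in_face:
  assumes F: "F \<in> dir_tree_complex A" and "sym A" and out: "\<And>a. (u, a) \<in> A \<Longrightarrow> (u, a) \<in> F"
  shows "u \<notin> Range F"
proof
  assume "u \<in> Range F"
  then obtain a where au: "(a, u) \<in> F" by blast
  then have "(u, a) \<in> F" using F \<open>sym A\<close> out by (auto simp: dir_tree_complex_def dest: symD)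
  with au have "(u, u) \<in> F\<^sup>+" by auto
  then show False using F by (simp add: dir_tree_complex_def acyclic_def)
qed

lemma rtrancl_exits_set:
  "(r, y) \<in> A\<^sup>* \<Longrightarrow> r \<in> W \<Longrightarrow> y \<notin> W \<Longrightarrow> \<exists>x z. (x, z) \<in> A \<and> x \<in> W \<and> z \<notin> W"
  by (induction rule: rtrancl_induct) auto

lemma acyclic_if_Domain_Range_disjoint:
  "Domain R \<inter> Range R = {} \<Longrightarrow> acyclic R"
  unfolding acyclic_def by (metis Domain.DomainI Range.RangeI disjoint_iff trancl_domain trancl_range)

text \<open>A face all of whose arcs start at vertices reachable from \<open>r\<close>, maximal with that property,
  spans every vertex reachable from \<open>r\<close>: an arc leaving its vertex set could be added.\<close>
lemma face_with_single_root:
  assumes "finite A" and "r \<in> V" and reach: "V \<subseteq> A\<^sup>* `` {r}"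
  shows "\<exists>F \<in> dir_tree_complex A. V - Range F = {r}"
proof -
  define D where "D = {F \<in> dir_tree_complex A. \<forall>(a, b) \<in> F. (r, a) \<in> F\<^sup>*}"
  have "{} \<in> D" by (simp add: D_def dir_tree_complex_def acyclic_def)
  moreover have "finite D"
    using dir_tree_complex_finite[OF \<open>finite A\<close>] by (simp add: D_def)
  ultimately obtain F where "F \<in> D" and Fmax: "\<forall>H \<in> D. F \<subseteq> H \<longrightarrow> F = H"
    using finite_has_maximal by blast
  then have F: "F \<in> dir_tree_complex A" and tails: "\<And>a b. (a, b) \<in> F \<Longrightarrow> (r, a) \<in> F\<^sup>*"
    by (auto simp: D_def)
  have "r \<notin> Range F"
  proof
    assume "r \<in> Range F"
    then obtain a where "(a, r) \<in> F" by blast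
    with tails have "(r, r) \<in> F\<^sup>+" by (meson rtrancl_into_trancl1)
    with F show False by (simp add: dir_tree_complex_def acyclic_def)
  qed
  have "V \<subseteq> F\<^sup>* `` {r}"
  proof (rule ccontr)
    assume "\<not> V \<subseteq> F\<^sup>* `` {r}"
    then obtain x y where xy: "(x, y) \<in> A" and x: "(r, x) \<in> F\<^sup>*" and y: "(r, y) \<notin> F\<^sup>*"
      using reach rtrancl_exits_set[of r _ A "F\<^sup>* `` {r}"] by blast
    have y_root: "y \<notin> Range F"
      using tails y by (blast intro: rtrancl_into_rtrancl)
    have "(y, x) \<notin> F\<^sup>*"
    proof
      assume "(y, x) \<in> F\<^sup>*"
      then show False
        using x y tails by (cases rule: converse_rtranclE) blast+
    qed
    then have "insert (x, y) F \<in> dir_tree_complex A"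
      by (rule insert_arc_face[OF F xy y_root])
    moreover have "\<forall>(a, b) \<in> insert (x, y) F. (r, a) \<in> F\<^sup>*"
      using tails x by auto
    then have "\<forall>(a, b) \<in> insert (x, y) F. (r, a) \<in> (insert (x, y) F)\<^sup>*"
      using rtrancl_mono[of F "insert (x, y) F"] by blast
    ultimately have "insert (x, y) F \<in> D" by (simp add: D_def)
    then have "F = insert (x, y) F" using Fmax by blast
    then show False using y_root by blast
  qed
  then have "V - Range F \<subseteq> {r}"
    using root_eq_of_reaches[of r _ F] by blast
  then have "V - Range F = {r}"
    using \<open>r \<in> V\<close> \<open>r \<notin> Range F\<close> by blast
  with F show ?thesis by blast
qed

lemma maximal_face_with_single_root:
  assumes "finite A" and "A \<subseteq> V \<times> V" and "finite V" and "r \<in> V" and "V \<subseteq> A\<^sup>* `` {r}"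
  shows "\<exists>G \<in> maximal_faces (dir_tree_complex A). card G + 1 = card V"
proof -
  obtain F where F: "F \<in> dir_tree_complex A" and "V - Range F = {r}"
    using face_with_single_root[of A r V] assms by blast
  obtain G where G: "G \<in> maximal_faces (dir_tree_complex A)" and "F \<subseteq> G"
    using maximal_face_exists[OF F \<open>finite A\<close>] by blast
  then have "G \<in> dir_tree_complex A" by (simp add: maximal_faces_def)
  have "V - Range G \<subseteq> {r}"
    using \<open>F \<subseteq> G\<close> \<open>V - Range F = {r}\<close> by blast
  moreover have "V - Range G \<noteq> {}"
    using face_has_root[OF \<open>G \<in> dir_tree_complex A\<close> \<open>finite A\<close> \<open>A \<subseteq> V \<times> V\<close>] \<open>r \<in> V\<close>
    by blast
  ultimately have "V - Range G = {r}" by blast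
  then have "card G + 1 = card V"
    using card_face_add_card_roots[OF \<open>G \<in> dir_tree_complex A\<close> \<open>finite A\<close> \<open>A \<subseteq> V \<times> V\<close> \<open>finite V\<close>] by simp
  with G show ?thesis by blast
qed

text \<open>Start from all arcs leaving \<open>u\<close> or \<open>v\<close> and extend to a maximal face: by symmetry of \<open>A\<close>,
  any arc entering \<open>u\<close> or \<open>v\<close> would close a 2-cycle, so both stay roots.\<close>
lemma maximal_face_with_two_roots:
  assumes "finite A" and "sym A" and "A \<subseteq> V \<times> V" and "finite V"
    and "u \<in> V" and "v \<in> V" and "u \<noteq> v"
    and no_inner_arc: "{u, v} \<inter> A `` {u, v} = {}" and disjoint: "A `` {u} \<inter> A `` {v} = {}"
  shows "\<exists>G \<in> maximal_faces (dir_tree_complex A). card G + 2 \<le> card V"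
proof -
  define F where "F = {(a, b) \<in> A. a = u \<or> a = v}"
  have "card {a. (a, b) \<in> F} \<le> 1" for b
  proof -
    have "{a. (a, b) \<in> F} \<subseteq> {if (u, b) \<in> A then u else v}"
      using disjoint by (auto simp: F_def)
    then show ?thesis
      using card_mono[of "{if (u, b) \<in> A then u else v}"] by fastforce
  qed
  moreover have "acyclic F"
    using no_inner_arc by (intro acyclic_if_Domain_Range_disjoint) (auto simp: F_def)
  ultimately have "F \<in> dir_tree_complex A"
    by (auto simp: dir_tree_complex_def F_def)
  then obtain G where G: "G \<in> maximal_faces (dir_tree_complex A)" and "F \<subseteq> G"
    using maximal_face_exists \<open>finite A\<close> by blast
  then have "G \<in> dir_tree_complex A" by (simp add: maximal_faces_def)
  have "u \<notin> Range G" "v \<notin> Range G"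
    using \<open>F \<subseteq> G\<close>
    by (auto intro!: notin_Range_if_out_arcs_in_face[OF \<open>G \<in> dir_tree_complex A\<close> \<open>sym A\<close>]
        simp: F_def)
  then have "2 \<le> card (V - Range G)"
    using card_mono[of "V - Range G" "{u, v}"] assms by auto
  then have "card G + 2 \<le> card V"
    using card_face_add_card_roots[OF \<open>G \<in> dir_tree_complex A\<close> \<open>finite A\<close> \<open>A \<subseteq> V \<times> V\<close> \<open>finite V\<close>] by linarith
  with G show ?thesis by blast
qed

lemma maximal_face_card_if_common_neighbours:
  assumes G: "G \<in> maximal_faces (dir_tree_complex A)"
    and "finite A" and "sym A" and "A \<subseteq> V \<times> V" and "finite V" and "V \<noteq> {}"
    and common: "\<And>u v. u \<in> V \<Longrightarrow> v \<in> V \<Longrightarrow> \<exists>w. (u, w) \<in> A\<^sup>= \<and> (v, w) \<in> A\<^sup>="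
  shows "card G + 1 = card V"
proof -
  have GK: "G \<in> dir_tree_complex A" using G by (simp add: maximal_faces_def)
  have reaches: "(r, w) \<in> G\<^sup>*" if "r \<in> V - Range G" and "(r, w) \<in> A\<^sup>=" for r w
    using that maximal_face_root_reaches[OF G, of w r] symD[OF \<open>sym A\<close>, of r w] by auto
  obtain r where r: "r \<in> V - Range G"
    using face_has_root[OF GK \<open>finite A\<close> \<open>A \<subseteq> V \<times> V\<close> \<open>V \<noteq> {}\<close>] by blast
  have "s = r" if s: "s \<in> V - Range G" for s
  proof -
    obtain w where "(r, w) \<in> A\<^sup>=" "(s, w) \<in> A\<^sup>="
      using common r s by blast
    then have "(w, r) \<in> (G\<inverse>)\<^sup>*" "(w, s) \<in> (G\<inverse>)\<^sup>*"
      using reaches r s by (simp_all add: rtrancl_converse)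
    then have "(r, s) \<in> (G\<inverse>)\<^sup>* \<or> (s, r) \<in> (G\<inverse>)\<^sup>*"
      by (rule single_valued_confluent[OF single_valued_converse_face[OF GK \<open>finite A\<close>]])
    then show "s = r"
      using r s root_eq_of_reaches[of s r G] root_eq_of_reaches[of r s G]
      by (auto simp: rtrancl_converse)
  qed
  with r have "V - Range G = {r}" by blast
  then show ?thesis
    using card_face_add_card_roots[OF GK \<open>finite A\<close> \<open>A \<subseteq> V \<times> V\<close> \<open>finite V\<close>] by simp
qed

section \<open>Walks and distances\<close>

lemma is_walk_Cons_Cons:
  "is_walk E (x # y # ys) u v \<longleftrightarrow> x = u \<and> E x y \<and> is_walk E (y # ys) y v"
  by (auto simp: is_walk_def nth_Cons less_Suc_eq_0_disj split: nat.splits)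

lemma is_walk_singleton [simp]:
  "is_walk E [x] u v \<longleftrightarrow> x = u \<and> x = v"
  by (auto simp: is_walk_def)

lemma rtrancl_if_is_walk:
  "is_walk E xs u v \<Longrightarrow> (u, v) \<in> {(x, y). E x y}\<^sup>*"
proof (induction xs arbitrary: u)
  case Nil
  then show ?case by (simp add: is_walk_def)
next
  case (Cons x xs)
  then show ?case
    by (cases xs) (auto simp: is_walk_Cons_Cons intro: converse_rtrancl_into_rtrancl)
qed

lemma gdist_le_walk_length:
  "is_walk E xs u v \<Longrightarrow> gdist E u v \<le> length xs - 1"
  unfolding gdist_def by (rule Least_le) (auto simp: is_walk_def)

lemma shortest_walk_exists:
  assumes "is_walk E xs u v"
  shows "\<exists>ys. is_walk E ys u v \<and> length ys = Suc (gdist E u v)"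
proof -
  have "\<exists>ys. is_walk E ys u v \<and> length ys = Suc (length xs - 1)"
    using assms by (auto simp: is_walk_def)
  then show ?thesis unfolding gdist_def by (rule LeastI)
qed

lemma common_neighbour_if_gdist_le_2:
  assumes "is_walk E xs u v" and "gdist E u v \<le> 2"
  shows "\<exists>w. (w = u \<or> E u w) \<and> (w = v \<or> E w v)"
proof -
  obtain ys where ys: "is_walk E ys u v" and "length ys \<le> 3"
    using shortest_walk_exists[OF assms(1)] assms(2) by fastforce
  moreover have "0 < length ys" using ys by (simp add: is_walk_def)
  ultimately have "length ys = 1 \<or> length ys = 2 \<or> length ys = 3" by linarith
  then consider a where "ys = [a]" | a b where "ys = [a, b]" | a b c where "ys = [a, b, c]"
    by (auto simp: length_Suc_conv numeral_eq_Suc)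
  then show ?thesis
    using ys by cases (auto simp: is_walk_Cons_Cons)
qed

lemma far_apart_vertices:
  assumes "3 \<le> gdist E u v"
  shows "u \<noteq> v" and "\<not> E u v" and "\<not> E u x \<or> \<not> E x v"
proof -
  have "\<not> is_walk E xs u v" if "length xs \<le> 3" for xs
    using gdist_le_walk_length[of E xs u v] assms that by linarith
  from this[of "[u]"] this[of "[u, v]"] this[of "[u, x, v]"]
  show "u \<noteq> v" "\<not> E u v" "\<not> E u x \<or> \<not> E x v"
    by (auto simp: is_walk_Cons_Cons)
qed

lemma diam_eq_Max_image:
  "diam V E = Max ((\<lambda>(u, v). gdist E u v) ` (V \<times> V))"
  unfolding diam_def by (rule arg_cong[where f = Max]) force

lemma gdist_le_diam:
  "finite V \<Longrightarrow> u \<in> V \<Longrightarrow> v \<in> V \<Longrightarrow> gdist E u v \<le> diam V E"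
  unfolding diam_eq_Max_image by (rule Max_ge) auto

lemma diam_attained:
  assumes "finite V" and "V \<noteq> {}"
  obtains u v where "u \<in> V" and "v \<in> V" and "gdist E u v = diam V E"
proof -
  have "diam V E \<in> (\<lambda>(u, v). gdist E u v) ` (V \<times> V)"
    unfolding diam_eq_Max_image using assms by (intro Max_in) simp_all
  then show ?thesis using that by auto
qed

section \<open>The doubled digraph of a connected simple graph\<close>

lemma simple_graph_double_digraph:
  assumes "simple_graph V E"
  shows "double_digraph E \<subseteq> V \<times> V" and "sym (double_digraph E)"
    and "finite (double_digraph E)"
proof -
  show "double_digraph E \<subseteq> V \<times> V" and "sym (double_digraph E)"
    using assms by (auto simp: simple_graph_def double_digraph_def sym_def)
  then show "finite (double_digraph E)"
    using assms by (simp add: simple_graph_def finite_subset)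
qed

lemma double_digraph_reachable:
  assumes "connected_graph V E" and "u \<in> V"
  shows "V \<subseteq> (double_digraph E)\<^sup>* `` {u}"
proof
  fix v assume "v \<in> V"
  then obtain xs where "is_walk E xs u v"
    using assms by (auto simp: connected_graph_def)
  then have "(u, v) \<in> {(x, y). E x y}\<^sup>*" by (rule rtrancl_if_is_walk)
  moreover have "{(x, y). E x y}\<^sup>* \<subseteq> (double_digraph E)\<^sup>*"
    by (rule rtrancl_mono) (auto simp: double_digraph_def)
  ultimately show "v \<in> (double_digraph E)\<^sup>* `` {u}" by blast
qed

lemma double_digraph_common_neighbour:
  assumes "connected_graph V E" and "finite V" and "diam V E \<le> 2" and "u \<in> V" and "v \<in> V"
  shows "\<exists>w. (u, w) \<in> (double_digraph E)\<^sup>= \<and> (v, w) \<in> (double_digraph E)\<^sup>="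
proof -
  obtain xs where walk: "is_walk E xs u v"
    using assms by (auto simp: connected_graph_def)
  have "gdist E u v \<le> 2"
    using gdist_le_diam[OF \<open>finite V\<close> \<open>u \<in> V\<close> \<open>v \<in> V\<close>, of E] \<open>diam V E \<le> 2\<close> by linarith
  then obtain w where "w = u \<or> E u w" and "w = v \<or> E w v"
    using common_neighbour_if_gdist_le_2[OF walk] by blast
  then show ?thesis by (intro exI[of _ w]) (auto simp: double_digraph_def)
qed

lemma double_digraph_far_apart:
  assumes "simple_graph V E" and "3 \<le> gdist E u v"
  shows "{u, v} \<inter> double_digraph E `` {u, v} = {}"
    and "double_digraph E `` {u} \<inter> double_digraph E `` {v} = {}"
proof -
  have sym: "E x y \<longleftrightarrow> E y x" and irrefl: "\<not> E x x" for x y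
    using assms(1) by (auto simp: simple_graph_def)
  note far = far_apart_vertices[OF assms(2)]
  show "{u, v} \<inter> double_digraph E `` {u, v} = {}"
    using far(1,2) irrefl by (auto simp: double_digraph_def sym)
  show "double_digraph E `` {u} \<inter> double_digraph E `` {v} = {}"
    using far(3) by (auto simp: double_digraph_def sym)
qed

lemma pure_complex_if_diam_le_2:
  assumes "simple_graph V E" and "connected_graph V E" and "diam V E \<le> 2"
  shows "pure_complex (dir_tree_complex (double_digraph E))"
  unfolding pure_complex_def
proof (intro ballI)
  let ?A = "double_digraph E"
  have "finite V" and "V \<noteq> {}"
    using assms by (auto simp: simple_graph_def connected_graph_def)
  note A = simple_graph_double_digraph[OF assms(1)]
  have card: "card G + 1 = card V" if "G \<in> maximal_faces (dir_tree_complex ?A)" for G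
    using maximal_face_card_if_common_neighbours[OF that A(3,2,1) \<open>finite V\<close> \<open>V \<noteq> {}\<close>
        double_digraph_common_neighbour[OF assms(2) \<open>finite V\<close> assms(3)]] .
  fix F H assume "F \<in> maximal_faces (dir_tree_complex ?A)" "H \<in> maximal_faces (dir_tree_complex ?A)"
  with card[of F] card[of H] show "card F = card H" by linarith
qed

lemma diam_le_2_if_pure_complex:
  assumes "simple_graph V E" and "connected_graph V E"
    and pure: "pure_complex (dir_tree_complex (double_digraph E))"
  shows "diam V E \<le> 2"
proof (rule ccontr)
  let ?M = "maximal_faces (dir_tree_complex (double_digraph E))"
  have "finite V" and "V \<noteq> {}"
    using assms by (auto simp: simple_graph_def connected_graph_def)
  note A = simple_graph_double_digraph[OF assms(1)]
  assume "\<not> diam V E \<le> 2"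
  moreover obtain u v where uv: "u \<in> V" "v \<in> V" "gdist E u v = diam V E"
    using diam_attained \<open>finite V\<close> \<open>V \<noteq> {}\<close> by blast
  ultimately have far: "3 \<le> gdist E u v" by simp
  obtain G2 where G2: "G2 \<in> ?M" "card G2 + 2 \<le> card V"
    using maximal_face_with_two_roots[OF A(3,2,1) \<open>finite V\<close> uv(1,2)
        far_apart_vertices(1)[OF far] double_digraph_far_apart[OF assms(1) far]] by blast
  obtain G1 where G1: "G1 \<in> ?M" "card G1 + 1 = card V"
    using maximal_face_with_single_root[OF A(3,1) \<open>finite V\<close> uv(1)
        double_digraph_reachable[OF assms(2) uv(1)]] by blast
  have "card G1 = card G2"
    using pure G1(1) G2(1) unfolding pure_complex_def by blast
  with G1(2) G2(2) show False by linarith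
qed

theorem mainTheorem5:
  fixes V :: "'a set" and E :: "'a \<Rightarrow> 'a \<Rightarrow> bool"
  assumes "simple_graph V E" and "connected_graph V E"
  shows "pure_complex (dir_tree_complex (double_digraph E)) \<longleftrightarrow> diam V E \<le> 2"
  using pure_complex_if_diam_le_2[OF assms] diam_le_2_if_pure_complex[OF assms] by blast

end
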